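(* Let $\mathcal X\subseteq\mathbb R^{d'}$, $d'\in\mathbb N$, and let $\mu$ be a probability measure on $\mathcal X$. Let $\sigma_h:\mathbb R\to\mathbb R$ be bounded, differentiable with $\sigma_h(0)=0$, $\sigma_h'(0)\neq0$ and $\sigma_h'$ bounded and Lipschitz. Let $\Phi=\{\phi_\theta:\theta\in\Theta\}\subseteq L^2(\mu)\cap L^\infty(\mu)$ be star-shaped at $0$ (i.e. $\lambda\phi\in\Phi$ for all $\phi\in\Phi$, $\lambda\in[0,1]$) and such that $\mathrm{span}\{\phi_\theta:\theta\in\Theta\}$ is dense in $L^2(\mu)$. Then $\mathrm{span}\{\sigma_h\circ\phi_\theta:\theta\in\Theta\}$ is dense in $L^2(\mu)$. *)

theory Defs
  imports "HOL-Probability.Probability"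
begin

definition L2 :: "'a measure \<Rightarrow> ('a \<Rightarrow> real) set" where
  "L2 M = {f. f \<in> borel_measurable M \<and> integrable M (\<lambda>x. (f x)^2)}"

definition Linf :: "'a measure \<Rightarrow> ('a \<Rightarrow> real) set" where
  "Linf M = {f. f \<in> borel_measurable M \<and> (\<exists>C. AE x in M. \<bar>f x\<bar> \<le> C)}"

definition lin_span :: "('a \<Rightarrow> real) set \<Rightarrow> ('a \<Rightarrow> real) set" where
  "lin_span S = {h. \<exists>n::nat. \<exists>c g. (\<forall>i<n. g i \<in> S) \<and> h = (\<lambda>x. \<Sum>i<n. c i * g i x)}"

definition dense_L2 :: "'a measure \<Rightarrow> ('a \<Rightarrow> real) set \<Rightarrow> bool" where
  "dense_L2 M S \<longleftrightarrow> S \<subseteq> L2 M \<and>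
     (\<forall>f\<in>L2 M. \<forall>e>0. \<exists>g\<in>S. sqrt (\<integral>x. (f x - g x)^2 \<partial>M) < e)"

end

theory Submission imports Defs begin

text \<open>Since \<open>\<sigma> 0 = 0\<close> and \<open>\<sigma>'\<close> is Lipschitz, \<open>\<sigma> y = \<sigma>' 0 y + O(y\<^sup>2)\<close>. For an essentially
  bounded \<open>\<phi>\<close> of the star-shaped family, \<open>t \<phi>\<close> belongs to the family as well, and
  \<open>\<sigma> (t \<phi>) / (t \<sigma>' 0)\<close> is within \<open>O(t)\<close> of \<open>\<phi>\<close> uniformly. Hence every element of the span
  of the family is a uniform limit of elements of the span of the \<open>\<sigma> \<circ> \<phi>\<close>. These are bounded,
  so lie in L2, and on a probability space uniform approximation is L2-approximation.\<close>

lemma MVT_from_zero: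
  fixes f :: "real \<Rightarrow> real"
  assumes "\<And>x. (f has_real_derivative f' x) (at x)"
  obtains z where "\<bar>z\<bar> \<le> \<bar>y\<bar>" "f y - f 0 = y * f' z"
proof -
  consider "y = 0" | "0 < y" | "y < 0" by linarith
  then show ?thesis
  proof cases
    case 1
    then show ?thesis using that[of 0] by simp
  next
    case 2
    then obtain z where "0 < z" "z < y" "f y - f 0 = (y - 0) * f' z"
      using MVT2[OF 2 assms] by blast
    then show ?thesis using that[of z] by simp
  next
    case 3
    then obtain z where "y < z" "z < 0" "f 0 - f y = (0 - y) * f' z"
      using MVT2[OF 3 assms] by blast
    then show ?thesis using that[of z] by (simp add: algebra_simps)
  qed
qed

lemma lipschitz_deriv_linearization_bound:
  fixes \<sigma> :: "real \<Rightarrow> real"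
  assumes diff: "\<And>x. \<sigma> differentiable (at x)" and lip: "L-lipschitz_on UNIV (deriv \<sigma>)"
  shows "\<bar>\<sigma> y - \<sigma> 0 - deriv \<sigma> 0 * y\<bar> \<le> L * y\<^sup>2"
proof -
  have "\<And>x. (\<sigma> has_real_derivative deriv \<sigma> x) (at x)"
    using diff DERIV_deriv_iff_real_differentiable by blast
  then obtain z where z: "\<bar>z\<bar> \<le> \<bar>y\<bar>" "\<sigma> y - \<sigma> 0 = y * deriv \<sigma> z"
    by (rule MVT_from_zero)
  have "\<sigma> y - \<sigma> 0 - deriv \<sigma> 0 * y = y * (deriv \<sigma> z - deriv \<sigma> 0)"
    using z(2) by (simp add: algebra_simps)
  then have "\<bar>\<sigma> y - \<sigma> 0 - deriv \<sigma> 0 * y\<bar> = \<bar>y\<bar> * \<bar>deriv \<sigma> z - deriv \<sigma> 0\<bar>"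
    by (simp add: abs_mult)
  also have "\<dots> \<le> \<bar>y\<bar> * (L * \<bar>z\<bar>)"
    using lipschitz_onD[OF lip, of z 0] by (intro mult_left_mono) (auto simp: dist_real_def)
  also have "\<dots> \<le> \<bar>y\<bar> * (L * \<bar>y\<bar>)"
    using z(1) lipschitz_on_nonneg[OF lip] by (intro mult_left_mono) auto
  finally show ?thesis by (simp add: power2_eq_square mult.commute mult.left_commute)
qed

lemma rescaled_linearization_bound:
  fixes \<sigma> :: "real \<Rightarrow> real"
  assumes lin: "\<And>y. \<bar>\<sigma> y - D * y\<bar> \<le> L * y\<^sup>2" and "D \<noteq> 0" "t > 0"
  shows "\<bar>u - \<sigma> (t * u) / (t * D)\<bar> \<le> t * L * u\<^sup>2 / \<bar>D\<bar>"
proof -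
  have "u - \<sigma> (t * u) / (t * D) = (D * (t * u) - \<sigma> (t * u)) / (t * D)"
    using assms(2,3) by (simp add: field_simps)
  also have "\<bar>\<dots>\<bar> \<le> L * (t * u)\<^sup>2 / (t * \<bar>D\<bar>)"
    using lin[of "t * u"] assms(3)
    by (simp add: abs_mult abs_minus_commute divide_right_mono)
  also have "\<dots> = t * L * u\<^sup>2 / \<bar>D\<bar>"
    using assms(3) by (simp add: power2_eq_square field_simps)
  finally show ?thesis .
qed

lemma star_shaped_activation_approx:
  fixes \<sigma> :: "real \<Rightarrow> real" and \<phi> :: "'a \<Rightarrow> real"
  assumes lin: "\<And>y. \<bar>\<sigma> y - D * y\<bar> \<le> L * y\<^sup>2" and "L \<ge> 0" "D \<noteq> 0"
    and bound: "AE x in M. \<bar>\<phi> x\<bar> \<le> C"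
    and star: "\<forall>l\<in>{0..1::real}. \<exists>\<psi>\<in>\<Phi>. AE x in M. \<psi> x = l * \<phi> x"
    and "\<epsilon> > 0"
  shows "\<exists>\<psi>\<in>\<Phi>. \<exists>a. AE x in M. \<bar>\<phi> x - a * \<sigma> (\<psi> x)\<bar> \<le> \<epsilon>"
proof -
  define K where "K = L * C\<^sup>2 + 1"
  define t where "t = min 1 (\<epsilon> * \<bar>D\<bar> / K)"
  have K: "K > 0" using \<open>L \<ge> 0\<close> by (simp add: K_def add_nonneg_pos)
  have t: "0 < t" "t \<le> 1" "t * K \<le> \<epsilon> * \<bar>D\<bar>"
    using K \<open>\<epsilon> > 0\<close> \<open>D \<noteq> 0\<close> by (auto simp: t_def min_def pos_le_divide_eq)
  have "t \<in> {0..1}" using t(1,2) by simp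
  then obtain \<psi> where \<psi>: "\<psi> \<in> \<Phi>" "AE x in M. \<psi> x = t * \<phi> x"
    using star by blast
  have "AE x in M. \<bar>\<phi> x - (1 / (t * D)) * \<sigma> (\<psi> x)\<bar> \<le> \<epsilon>"
    using \<psi>(2) bound
  proof eventually_elim
    case (elim x)
    have "(\<phi> x)\<^sup>2 \<le> C\<^sup>2" using power_mono[OF elim(2) abs_ge_zero, of 2] by simp
    then have "L * (\<phi> x)\<^sup>2 \<le> K"
      unfolding K_def using mult_left_mono[OF _ \<open>L \<ge> 0\<close>] by fastforce
    then have "t * L * (\<phi> x)\<^sup>2 \<le> \<epsilon> * \<bar>D\<bar>"
      using t by (metis mult.assoc mult_left_mono less_imp_le order_trans)
    then have "t * L * (\<phi> x)\<^sup>2 / \<bar>D\<bar> \<le> \<epsilon>"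
      using \<open>D \<noteq> 0\<close> by (simp add: divide_le_eq)
    then show ?case
      using rescaled_linearization_bound[OF lin \<open>D \<noteq> 0\<close> t(1), of "\<phi> x"] elim(1) by simp
  qed
  then show ?thesis using \<psi>(1) by blast
qed

lemma lin_span_zero: "(\<lambda>x. 0) \<in> lin_span S"
  unfolding lin_span_def by (rule CollectI, rule exI[of _ 0]) auto

lemma lin_span_add_scaled:
  assumes "h \<in> lin_span S" "s \<in> S"
  shows "(\<lambda>x. h x + c * s x) \<in> lin_span S"
proof -
  obtain n :: nat and c' g where ng: "\<forall>i<n. g i \<in> S" "h = (\<lambda>x. \<Sum>i<n. c' i * g i x)"
    using assms(1) unfolding lin_span_def by blast
  have "\<forall>i<Suc n. (g(n := s)) i \<in> S" using ng(1) assms(2) by auto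
  moreover have "(\<lambda>x. h x + c * s x) = (\<lambda>x. \<Sum>i<Suc n. (c'(n := c)) i * (g(n := s)) i x)"
    using ng(2) by (auto intro!: sum.cong)
  ultimately show ?thesis unfolding lin_span_def by blast
qed

lemma lin_span_induct [consumes 1, case_names zero add]:
  assumes "h \<in> lin_span S"
    and "P (\<lambda>x. 0)"
    and "\<And>h c s. P h \<Longrightarrow> s \<in> S \<Longrightarrow> P (\<lambda>x. h x + c * s x)"
  shows "P h"
proof -
  obtain n :: nat and c g where ng: "\<forall>i<n. g i \<in> S" "h = (\<lambda>x. \<Sum>i<n. c i * g i x)"
    using assms(1) unfolding lin_span_def by blast
  have "P (\<lambda>x. \<Sum>i<m. c i * g i x)" if "m \<le> n" for m
    using that
  proof (induction m)
    case 0
    then show ?case using assms(2) by simp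
  next
    case (Suc m)
    then show ?case using assms(3)[of "\<lambda>x. \<Sum>i<m. c i * g i x" "g m" "c m"] ng(1) by simp
  qed
  then show ?thesis using ng(2) by simp
qed

lemma lin_span_uniform_approx:
  assumes approx: "\<And>\<phi> \<epsilon>. \<phi> \<in> \<Phi> \<Longrightarrow> \<epsilon> > 0 \<Longrightarrow> \<exists>s\<in>S. \<exists>a. AE x in M. \<bar>\<phi> x - a * s x\<bar> \<le> \<epsilon>"
    and "g \<in> lin_span \<Phi>"
  shows "\<forall>\<epsilon>>0. \<exists>h\<in>lin_span S. AE x in M. \<bar>g x - h x\<bar> \<le> \<epsilon>"
  using assms(2)
proof (induction rule: lin_span_induct)
  case zero
  then show ?case using lin_span_zero by force
next
  case (add g c \<phi>)
  show ?case
  proof (intro allI impI)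
    fix \<epsilon> :: real assume "\<epsilon> > 0"
    then obtain h where h: "h \<in> lin_span S" "AE x in M. \<bar>g x - h x\<bar> \<le> \<epsilon> / 2"
      using add.IH by (meson half_gt_zero)
    define \<delta> where "\<delta> = \<epsilon> / (2 * (\<bar>c\<bar> + 1))"
    have "\<delta> > 0" using \<open>\<epsilon> > 0\<close> by (simp add: \<delta>_def add_nonneg_pos)
    then obtain s a where sa: "s \<in> S" "AE x in M. \<bar>\<phi> x - a * s x\<bar> \<le> \<delta>"
      using approx add.hyps by blast
    have c\<delta>: "\<bar>c\<bar> * \<delta> \<le> \<epsilon> / 2"
      using \<open>\<epsilon> > 0\<close> by (simp add: \<delta>_def field_simps)
    have "AE x in M. \<bar>g x + c * \<phi> x - (h x + (c * a) * s x)\<bar> \<le> \<epsilon>"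
      using h(2) sa(2)
    proof eventually_elim
      case (elim x)
      have "g x + c * \<phi> x - (h x + (c * a) * s x) = (g x - h x) + c * (\<phi> x - a * s x)"
        by (simp add: algebra_simps)
      then have "\<bar>g x + c * \<phi> x - (h x + (c * a) * s x)\<bar> \<le> \<bar>g x - h x\<bar> + \<bar>c\<bar> * \<bar>\<phi> x - a * s x\<bar>"
        by (metis abs_mult abs_triangle_ineq)
      also have "\<dots> \<le> \<epsilon> / 2 + \<bar>c\<bar> * \<delta>"
        using elim by (intro add_mono mult_left_mono) auto
      finally show ?case using c\<delta> by linarith
    qed
    moreover have "(\<lambda>x. h x + (c * a) * s x) \<in> lin_span S"
      using h(1) sa(1) by (rule lin_span_add_scaled)
    ultimately show "\<exists>h\<in>lin_span S. AE x in M. \<bar>g x + c * \<phi> x - h x\<bar> \<le> \<epsilon>" by force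
  qed
qed

lemma lin_span_uniformly_bounded:
  assumes "\<And>s. s \<in> S \<Longrightarrow> s \<in> borel_measurable M \<and> (\<forall>x. \<bar>s x\<bar> \<le> B)" "h \<in> lin_span S"
  shows "h \<in> borel_measurable M \<and> (\<exists>K. \<forall>x. \<bar>h x\<bar> \<le> K)"
  using assms(2)
proof (induction rule: lin_span_induct)
  case zero
  then show ?case by auto
next
  case (add h c s)
  then obtain K where K: "\<forall>x. \<bar>h x\<bar> \<le> K" by blast
  have "\<bar>h x + c * s x\<bar> \<le> K + \<bar>c\<bar> * B" for x
  proof -
    have "\<bar>h x + c * s x\<bar> \<le> \<bar>h x\<bar> + \<bar>c\<bar> * \<bar>s x\<bar>"
      by (metis abs_mult abs_triangle_ineq)
    also have "\<dots> \<le> K + \<bar>c\<bar> * B"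
      using K assms(1)[OF add.hyps] by (intro add_mono mult_left_mono) auto
    finally show ?thesis .
  qed
  then show ?case using add assms(1)[OF add.hyps] by auto
qed

lemma square_sum_le: "(a + b)\<^sup>2 \<le> 2 * a\<^sup>2 + 2 * (b::real)\<^sup>2"
proof -
  have "2 * a\<^sup>2 + 2 * b\<^sup>2 - (a + b)\<^sup>2 = (a - b)\<^sup>2" by (simp add: power2_eq_square algebra_simps)
  then show ?thesis using zero_le_power2[of "a - b"] by linarith
qed

lemma bounded_measurable_in_L2:
  assumes "finite_measure M" "h \<in> borel_measurable M" "\<forall>x. \<bar>h x\<bar> \<le> K"
  shows "h \<in> L2 M"
proof -
  have "integrable M (\<lambda>x. K\<^sup>2)" using assms(1) by (rule finite_measure.integrable_const)
  moreover have "(\<lambda>x. (h x)\<^sup>2) \<in> borel_measurable M" using assms(2) by measurable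
  moreover have "AE x in M. norm ((h x)\<^sup>2) \<le> norm (K\<^sup>2)"
    using power_mono[OF assms(3)[rule_format] abs_ge_zero, of _ 2] by simp
  ultimately have "integrable M (\<lambda>x. (h x)\<^sup>2)" by (rule Bochner_Integration.integrable_bound)
  then show ?thesis using assms(2) unfolding L2_def by blast
qed

lemma L2_diff_square_integrable:
  assumes "f \<in> L2 M" "g \<in> L2 M"
  shows "integrable M (\<lambda>x. (f x - g x)\<^sup>2)"
proof -
  have m: "f \<in> borel_measurable M" "g \<in> borel_measurable M"
    and i: "integrable M (\<lambda>x. (f x)\<^sup>2)" "integrable M (\<lambda>x. (g x)\<^sup>2)"
    using assms unfolding L2_def by auto
  have "integrable M (\<lambda>x. 2 * (f x)\<^sup>2 + 2 * (g x)\<^sup>2)" using i by auto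
  moreover have "(\<lambda>x. (f x - g x)\<^sup>2) \<in> borel_measurable M" using m by measurable
  moreover have "AE x in M. norm ((f x - g x)\<^sup>2) \<le> norm (2 * (f x)\<^sup>2 + 2 * (g x)\<^sup>2)"
    using square_sum_le[of "f _" "- g _"] by simp
  ultimately show ?thesis by (rule Bochner_Integration.integrable_bound)
qed

text \<open>The inequality \<open>(a + b)\<^sup>2 \<le> 2 a\<^sup>2 + 2 b\<^sup>2\<close> stands in for the triangle inequality of the
  L2 norm.\<close>
lemma dense_L2_uniform_approx:
  assumes "prob_space M" "dense_L2 M A" "B \<subseteq> L2 M"
    and approx: "\<And>g \<epsilon>. g \<in> A \<Longrightarrow> \<epsilon> > 0 \<Longrightarrow> \<exists>h\<in>B. AE x in M. \<bar>g x - h x\<bar> \<le> \<epsilon>"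
  shows "dense_L2 M B"
  unfolding dense_L2_def
proof (intro conjI ballI allI impI)
  interpret prob_space M by fact
  fix f and e :: real assume f: "f \<in> L2 M" and "e > 0"
  then obtain g where g: "g \<in> A" "sqrt (\<integral>x. (f x - g x)\<^sup>2 \<partial>M) < e / 2"
    using assms(2) unfolding dense_L2_def by (meson half_gt_zero)
  obtain h where h: "h \<in> B" "AE x in M. \<bar>g x - h x\<bar> \<le> e / 4"
    using approx[OF g(1)] \<open>e > 0\<close> by (meson divide_pos_pos zero_less_numeral)
  have Ifg: "integrable M (\<lambda>x. (f x - g x)\<^sup>2)"
    using f g(1) assms(2) by (intro L2_diff_square_integrable) (auto simp: dense_L2_def)
  have Ifh: "integrable M (\<lambda>x. (f x - h x)\<^sup>2)"
    using f h(1) assms(3) by (intro L2_diff_square_integrable) auto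
  have Ifg_small: "(\<integral>x. (f x - g x)\<^sup>2 \<partial>M) < (e / 2)\<^sup>2"
  proof -
    have "sqrt (\<integral>x. (f x - g x)\<^sup>2 \<partial>M) < sqrt ((e / 2)\<^sup>2)" using g(2) \<open>e > 0\<close> by simp
    then show ?thesis by (simp only: real_sqrt_less_iff)
  qed
  have "(\<integral>x. (f x - h x)\<^sup>2 \<partial>M) \<le> (\<integral>x. 2 * (f x - g x)\<^sup>2 + 2 * (e / 4)\<^sup>2 \<partial>M)"
  proof (rule integral_mono_AE[OF Ifh])
    show "integrable M (\<lambda>x. 2 * (f x - g x)\<^sup>2 + 2 * (e / 4)\<^sup>2)" using Ifg by auto
    show "AE x in M. (f x - h x)\<^sup>2 \<le> 2 * (f x - g x)\<^sup>2 + 2 * (e / 4)\<^sup>2"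
      using h(2)
    proof eventually_elim
      case (elim x)
      have "(g x - h x)\<^sup>2 \<le> (e / 4)\<^sup>2"
        using power_mono[OF elim abs_ge_zero, of 2] by simp
      moreover have "(f x - h x)\<^sup>2 \<le> 2 * (f x - g x)\<^sup>2 + 2 * (g x - h x)\<^sup>2"
        using square_sum_le[of "f x - g x" "g x - h x"] by simp
      ultimately show ?case by linarith
    qed
  qed
  also have "\<dots> = 2 * (\<integral>x. (f x - g x)\<^sup>2 \<partial>M) + 2 * (e / 4)\<^sup>2"
    using Ifg by (simp add: prob_space)
  also have "\<dots> < e\<^sup>2"
  proof -
    have "0 < e\<^sup>2" using \<open>e > 0\<close> by simp
    then show ?thesis using Ifg_small unfolding power_divide
      by (simp only: power2_eq_square[of "2::real"] power2_eq_square[of "4::real"])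
  qed
  finally have "sqrt (\<integral>x. (f x - h x)\<^sup>2 \<partial>M) < sqrt (e\<^sup>2)" by (rule real_sqrt_less_mono)
  then show "\<exists>h\<in>B. sqrt (\<integral>x. (f x - h x)\<^sup>2 \<partial>M) < e"
    using h(1) \<open>e > 0\<close> by auto
qed (use assms(3) in auto)

theorem mainTheorem5:
  fixes M :: "'a::euclidean_space measure"
    and \<sigma> :: "real \<Rightarrow> real"
    and \<Phi> :: "('a \<Rightarrow> real) set"
  assumes "prob_space M"
    and "sets M = sets (restrict_space borel (space M))"
    and "bounded (range \<sigma>)"
    and "\<And>x. \<sigma> differentiable (at x)"
    and "\<sigma> 0 = 0"
    and "deriv \<sigma> 0 \<noteq> 0"
    and "bounded (range (deriv \<sigma>))"
    and "\<exists>L. L-lipschitz_on UNIV (deriv \<sigma>)"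
    and "\<Phi> \<subseteq> L2 M \<inter> Linf M"
    and "\<forall>\<phi>\<in>\<Phi>. \<forall>l\<in>{0..1::real}. \<exists>\<psi>\<in>\<Phi>. AE x in M. \<psi> x = l * \<phi> x"
    and "dense_L2 M (lin_span \<Phi>)"
  shows "dense_L2 M (lin_span ((\<lambda>\<phi>. \<sigma> \<circ> \<phi>) ` \<Phi>))"
proof -
  define S where "S = (\<lambda>\<phi>. \<sigma> \<circ> \<phi>) ` \<Phi>"
  obtain L where lip: "L-lipschitz_on UNIV (deriv \<sigma>)" using assms(8) by blast
  obtain B where B: "\<forall>y. \<bar>\<sigma> y\<bar> \<le> B" using assms(3) unfolding bounded_iff by auto
  have "\<sigma> \<in> borel_measurable borel"
    using assms(4) by (intro borel_measurable_continuous_onI continuous_at_imp_continuous_on)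
      (auto intro: differentiable_imp_continuous_within)
  then have S_bounded: "s \<in> borel_measurable M \<and> (\<forall>x. \<bar>s x\<bar> \<le> B)" if "s \<in> S" for s
    using that assms(9) B by (auto simp: S_def L2_def)
  have "lin_span S \<subseteq> L2 M"
    using lin_span_uniformly_bounded[OF S_bounded] prob_space.finite_measure[OF assms(1)]
      bounded_measurable_in_L2 by blast
  moreover have "\<exists>s\<in>S. \<exists>a. AE x in M. \<bar>\<phi> x - a * s x\<bar> \<le> \<epsilon>"
    if \<phi>: "\<phi> \<in> \<Phi>" and "\<epsilon> > 0" for \<phi> \<epsilon>
  proof -
    have lin: "\<bar>\<sigma> y - deriv \<sigma> 0 * y\<bar> \<le> L * y\<^sup>2" for y
      using lipschitz_deriv_linearization_bound[OF assms(4) lip] assms(5) by simp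
    obtain C where "AE x in M. \<bar>\<phi> x\<bar> \<le> C" using assms(9) \<phi> unfolding Linf_def by blast
    then obtain \<psi> a where "\<psi> \<in> \<Phi>" "AE x in M. \<bar>\<phi> x - a * \<sigma> (\<psi> x)\<bar> \<le> \<epsilon>"
      using star_shaped_activation_approx[OF lin lipschitz_on_nonneg[OF lip] assms(6)]
        assms(10) \<phi> \<open>\<epsilon> > 0\<close> by blast
    moreover have "\<sigma> \<circ> \<psi> \<in> S" using \<open>\<psi> \<in> \<Phi>\<close> by (simp add: S_def)
    ultimately show ?thesis by (intro bexI[of _ "\<sigma> \<circ> \<psi>"]) auto
  qed
  then have "\<exists>h\<in>lin_span S. AE x in M. \<bar>g x - h x\<bar> \<le> \<epsilon>"
    if "g \<in> lin_span \<Phi>" "\<epsilon> > 0" for g \<epsilon>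
    using lin_span_uniform_approx that by blast
  ultimately show ?thesis
    unfolding S_def[symmetric] by (rule dense_L2_uniform_approx[OF assms(1,11)])
qed

end
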